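(* For every real $x$ and every natural number $n$, \[0 < \mathrm{LB}_{\exp}(x,n) \le \exp(x) \le \mathrm{UB}_{\exp}(x,n).\]
   Context: For $-1 \le x < 0$ and natural $n$: \[\mathrm{LB}_{\exp}(x,n) = \sum_{i=0}^{2(n+1)+1}\frac{x^i}{i!},\qquad \mathrm{UB}_{\exp}(x,n) = \sum_{i=0}^{2(n+1)}\frac{x^i}{i!}.\] Further: $\mathrm{LB}_{\exp}(0,n)=\mathrm{UB}_{\exp}(0,n)=1$; for $x<-1$, with $k = -\lfloor x\rfloor$: $\mathrm{LB}_{\exp}(x,n) = \left(\mathrm{LB}_{\exp}(x/k,n)\right)^{k}$ and $\mathrm{UB}_{\exp}(x,n) = \left(\mathrm{UB}_{\exp}(x/k,n)\right)^{k}$; for $x>0$: $\mathrm{LB}_{\exp}(x,n) = 1/\mathrm{UB}_{\exp}(-x,n)$ and $\mathrm{UB}_{\exp}(x,n) = 1/\mathrm{LB}_{\exp}(-x,n)$. *)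

theory Defs
  imports Complex_Main
begin

(* Taylor polynomials used on the base interval -1 <= x < 0 *)
definition lb_exp_base :: "real \<Rightarrow> nat \<Rightarrow> real" where
  "lb_exp_base x n = (\<Sum>i=0..2*(n+1)+1. x ^ i / fact i)"

definition ub_exp_base :: "real \<Rightarrow> nat \<Rightarrow> real" where
  "ub_exp_base x n = (\<Sum>i=0..2*(n+1). x ^ i / fact i)"

definition lb_exp_neg :: "real \<Rightarrow> nat \<Rightarrow> real" where
  "lb_exp_neg x n =
     (if x = 0 then 1
      else if -1 \<le> x then lb_exp_base x n
      else (let k = nat (- \<lfloor>x\<rfloor>) in (lb_exp_base (x / real k) n) ^ k))"

definition ub_exp_neg :: "real \<Rightarrow> nat \<Rightarrow> real" where
  "ub_exp_neg x n =
     (if x = 0 then 1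
      else if -1 \<le> x then ub_exp_base x n
      else (let k = nat (- \<lfloor>x\<rfloor>) in (ub_exp_base (x / real k) n) ^ k))"

definition LB_exp :: "real \<Rightarrow> nat \<Rightarrow> real" where
  "LB_exp x n = (if 0 < x then 1 / ub_exp_neg (- x) n else lb_exp_neg x n)"

definition UB_exp :: "real \<Rightarrow> nat \<Rightarrow> real" where
  "UB_exp x n = (if 0 < x then 1 / lb_exp_neg (- x) n else ub_exp_neg x n)"

end

theory Submission
  imports Defs
begin

text \<open>
  On \<open>[-1, 0]\<close> the Lagrange remainder \<open>exp t * x^m / m!\<close> of the Taylor polynomial of
  \<open>exp\<close> has the sign of \<open>x^m\<close>, so truncating after an odd degree gives a lower bound and
  after an even degree an upper bound; grouping the terms in pairs
  \<open>x^(2j)/(2j)! * (1 + x/(2j+1))\<close> shows the lower bound is positive. For \<open>x < -1\<close> the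
  bounds for \<open>exp (x/k)\<close> with \<open>k = -\<lfloor>x\<rfloor>\<close> are raised to the \<open>k\<close>-th power, and for
  \<open>x > 0\<close> those for \<open>exp (-x)\<close> are inverted.
\<close>

lemma exp_ge_taylor_even:
  fixes x :: real
  assumes "even m"
  shows "(\<Sum>i<m. x ^ i / fact i) \<le> exp x"
proof -
  obtain t where t: "exp x = (\<Sum>i<m. x ^ i / fact i) + exp t / fact m * x ^ m"
    using Maclaurin_exp_le by blast
  have "0 \<le> exp t / fact m * x ^ m"
    using assms by (simp add: zero_le_even_power)
  with t show ?thesis by linarith
qed

lemma exp_le_taylor_odd:
  fixes x :: real
  assumes "x \<le> 0" "odd m"
  shows "exp x \<le> (\<Sum>i<m. x ^ i / fact i)"
proof -
  obtain t where t: "exp x = (\<Sum>i<m. x ^ i / fact i) + exp t / fact m * x ^ m"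
    using Maclaurin_exp_le by blast
  have "x ^ m \<le> 0"
    using assms by (simp add: power_le_zero_eq odd_pos)
  then have "exp t / fact m * x ^ m \<le> 0"
    by (simp add: divide_nonpos_pos mult_nonneg_nonpos)
  with t show ?thesis by linarith
qed

lemma exp_taylor_pair_eq:
  fixes x :: real
  shows "(\<Sum>i\<in>{2*j..<2*j+2}. x ^ i / fact i) = x ^ (2*j) / fact (2*j) * (1 + x / real (2*j+1))"
proof -
  have "fact (2*j+1) = real (2*j+1) * (fact (2*j) :: real)"
    by simp
  then have "x ^ (2*j+1) / fact (2*j+1) = x ^ (2*j) / fact (2*j) * (x / real (2*j+1))"
    by (simp add: field_simps)
  moreover have "{2*j..<2*j+2} = {2*j, 2*j+1}"
    by auto
  ultimately show ?thesis
    by (simp add: distrib_left)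
qed

lemma exp_taylor_even_pos:
  fixes x :: real
  assumes "-1 \<le> x" "x \<le> 0" "2 \<le> k"
  shows "0 < (\<Sum>i<2*k. x ^ i / fact i)"
proof -
  define pair where "pair j = (\<Sum>i\<in>{j*2..<j*2+2}. x ^ i / fact i)" for j
  have pair_eq: "pair j = x ^ (2*j) / fact (2*j) * (1 + x / real (2*j+1))" for j
    unfolding pair_def using exp_taylor_pair_eq[of x j] by (simp add: mult.commute)
  have pair_nonneg: "0 \<le> pair j" for j
  proof -
    have "-1 \<le> x / real (2*j+1)"
      using assms by (simp add: field_simps)
    then show ?thesis
      unfolding pair_eq by (simp add: zero_le_even_power)
  qed
  obtain j where "j < k" "0 < pair j"
  proof (cases "x = 0")
    case True
    then show ?thesis
      using that[of 0] assms by (simp add: pair_eq)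
  next
    case False
    have "0 < 1 + x / 3" "0 < x ^ 2"
      using assms False by auto
    then have "0 < pair 1"
      unfolding pair_eq by simp
    then show ?thesis
      using that[of 1] assms by simp
  qed
  then have "0 < (\<Sum>j<k. pair j)"
    by (intro sum_pos2[of _ j]) (auto intro: pair_nonneg)
  also have "\<dots> = (\<Sum>i<2*k. x ^ i / fact i)"
    unfolding pair_def sum.nat_group by (simp add: mult.commute)
  finally show ?thesis .
qed

lemma lb_exp_base_eq_taylor: "lb_exp_base x n = (\<Sum>i<2*n+4. x ^ i / fact i)"
  unfolding lb_exp_base_def atLeast0AtMost lessThan_Suc_atMost[symmetric]
  by (simp add: numeral_eq_Suc)

lemma ub_exp_base_eq_taylor: "ub_exp_base x n = (\<Sum>i<2*n+3. x ^ i / fact i)"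
  unfolding ub_exp_base_def atLeast0AtMost lessThan_Suc_atMost[symmetric]
  by (simp add: numeral_eq_Suc)

lemma exp_base_bounds:
  assumes "-1 \<le> x" "x \<le> 0"
  shows "0 < lb_exp_base x n \<and> lb_exp_base x n \<le> exp x \<and> exp x \<le> ub_exp_base x n"
proof -
  have index: "2 * (n + 2) = 2 * n + 4"
    by simp
  have "0 < (\<Sum>i<2*n+4. x ^ i / fact i)"
    using exp_taylor_even_pos[OF assms, of "n+2"] by (simp only: index)
  moreover have "(\<Sum>i<2*n+4. x ^ i / fact i) \<le> exp x"
    by (rule exp_ge_taylor_even) simp
  moreover have "exp x \<le> (\<Sum>i<2*n+3. x ^ i / fact i)"
    using assms by (intro exp_le_taylor_odd) simp_all
  ultimately show ?thesis
    by (simp only: lb_exp_base_eq_taylor ub_exp_base_eq_taylor)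
qed

lemma divide_neg_floor_in_unit:
  fixes x :: real
  assumes "x < -1"
  defines "k \<equiv> nat (- \<lfloor>x\<rfloor>)"
  shows "0 < k" and "-1 \<le> x / real k" and "x / real k \<le> 0"
proof -
  have k: "real k = - of_int \<lfloor>x\<rfloor>" "\<lfloor>x\<rfloor> \<le> -2"
    using assms unfolding k_def by linarith+
  then have "0 < real k"
    by linarith
  then show "0 < k"
    by simp
  have "- x \<le> real k"
    using k by linarith
  with \<open>0 < k\<close> show "-1 \<le> x / real k"
    by (simp add: field_simps)
  show "x / real k \<le> 0"
    using assms(1) by (intro divide_nonpos_nonneg) simp_all
qed

lemma exp_neg_bounds:
  fixes x :: real
  assumes "x \<le> 0"
  shows "0 < lb_exp_neg x n \<and> lb_exp_neg x n \<le> exp x \<and> exp x \<le> ub_exp_neg x n"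
proof -
  consider "x = 0" | "-1 \<le> x" "x \<noteq> 0" | "x < -1"
    by linarith
  then show ?thesis
  proof cases
    case 1
    then show ?thesis
      by (simp add: lb_exp_neg_def ub_exp_neg_def)
  next
    case 2
    then show ?thesis
      using exp_base_bounds assms by (simp add: lb_exp_neg_def ub_exp_neg_def)
  next
    case 3
    define k where "k = nat (- \<lfloor>x\<rfloor>)"
    have k: "0 < k" "-1 \<le> x / real k" "x / real k \<le> 0"
      using divide_neg_floor_in_unit[OF 3] unfolding k_def by simp_all
    note base = exp_base_bounds[OF k(2,3), of n]
    have "lb_exp_base (x / real k) n ^ k \<le> exp (x / real k) ^ k"
      "exp (x / real k) ^ k \<le> ub_exp_base (x / real k) n ^ k"
      using base by (auto intro!: power_mono)
    moreover have "exp (x / real k) ^ k = exp x"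
      using k(1) by (simp flip: exp_of_nat_mult)
    moreover have "lb_exp_neg x n = lb_exp_base (x / real k) n ^ k"
      "ub_exp_neg x n = ub_exp_base (x / real k) n ^ k"
      using 3 by (simp_all add: lb_exp_neg_def ub_exp_neg_def k_def Let_def)
    ultimately show ?thesis
      using base by simp
  qed
qed

theorem proposition6:
  fixes x :: real and n :: nat
  shows "0 < LB_exp x n \<and> LB_exp x n \<le> exp x \<and> exp x \<le> UB_exp x n"
proof (cases "0 < x")
  case True
  then have bounds: "0 < lb_exp_neg (-x) n" "lb_exp_neg (-x) n \<le> exp (-x)"
    "exp (-x) \<le> ub_exp_neg (-x) n"
    using exp_neg_bounds[of "-x" n] by auto
  have "exp x = 1 / exp (-x)"
    by (simp add: exp_minus divide_inverse)
  with True bounds show ?thesis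
    by (simp add: LB_exp_def UB_exp_def frac_le)
next
  case False
  then show ?thesis
    using exp_neg_bounds[of x n] by (simp add: LB_exp_def UB_exp_def)
qed

end
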